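(* Let $(T,f,(\le_h))$ be an ordered merge tree and let $\sqsubseteq_L$ be the relation on $L(T)$ given by $u_1\sqsubseteq_L u_2$ iff $\mathrm{anc}_h(u_1)\le_h\mathrm{anc}_h(u_2)$ with $h=\max(f(u_1),f(u_2))$. Then $\sqsubseteq_L$ separates subtrees: for all leaves $u,u_1,u_2\in L(T)$ with $u_1\sqsubseteq_L u\sqsubseteq_L u_2$, we have $u\in T_{\mathrm{lca}(u_1,u_2)}$.
   Context: A merge tree $(T,f)$: a finite rooted tree $T$ identified with its topological realisation, with a continuous $f\colon T\to\mathbb{R}\cup\{\infty\}$ strictly increasing towards the root, $f(v)=\infty$ iff $v$ is the root; lowest leaf at height $0$; $L(T)$ is the set of leaves. $x_1\preceq x_2$ iff there is an $f$-increasing path from $x_1$ to $x_2$; $T_x$ is the subtree of descendants of $x$; $\mathrm{lca}$ is the lowest common ancestor; $\mathrm{anc}_h(x)$ is the unique ancestor of $x$ at height $h\ge f(x)$; $\mathbb{L}_h=\{x:f(x)=h\}$. A layer-order is a family $(\le_h)_{h\ge0}$ of total orders on the $\mathbb{L}_h$ that is consistent: for $h_1\le h_2$ and $x_1,x_2\in\mathbb{L}_{h_1}$, $x_1\le_{h_1}x_2$ implies $\mathrm{anc}_{h_2}(x_1)\le_{h_2}\mathrm{anc}_{h_2}(x_2)$. An ordered merge tree is $(T,f,(\le_h))$. *)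

theory Defs
  imports "HOL-Analysis.Analysis"
begin

text \<open>A finite rooted tree is given combinatorially by a finite vertex set V, a root r and a
parent map par (with the convention par r = r).  The topological realisation of the tree is encoded by
points (v, h): a non-root vertex v together with a height h on the edge from v to par v,
f v \<le> h < f (par v); the root itself is the point (r, \<infinity>).  The height function on the
realisation is snd (linear along edges, hence continuous and strictly increasing).\<close>

definition vanc :: "('v \<Rightarrow> 'v) \<Rightarrow> 'v \<Rightarrow> 'v \<Rightarrow> bool" where
  "vanc par v w \<longleftrightarrow> (\<exists>n. (par ^^ n) v = w)"

definition is_leaf :: "'v set \<Rightarrow> 'v \<Rightarrow> ('v \<Rightarrow> 'v) \<Rightarrow> 'v \<Rightarrow> bool" where
  "is_leaf V r par v \<longleftrightarrow> v \<in> V \<and> \<not> (\<exists>w\<in>V. w \<noteq> r \<and> par w = v)"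

definition merge_tree :: "'v set \<Rightarrow> 'v \<Rightarrow> ('v \<Rightarrow> 'v) \<Rightarrow> ('v \<Rightarrow> ereal) \<Rightarrow> bool" where
  "merge_tree V r par f \<longleftrightarrow>
     finite V \<and> r \<in> V \<and> par r = r \<and> (\<forall>v\<in>V. par v \<in> V) \<and>
     (\<forall>v\<in>V. \<exists>n. (par ^^ n) v = r) \<and>
     (\<forall>v\<in>V. f v = \<infinity> \<longleftrightarrow> v = r) \<and>
     (\<forall>v\<in>V - {r}. f v < f (par v)) \<and>
     (\<forall>v. is_leaf V r par v \<longrightarrow> 0 \<le> f v) \<and>
     (\<exists>v. is_leaf V r par v \<and> f v = 0)"

definition mt_points :: "'v set \<Rightarrow> 'v \<Rightarrow> ('v \<Rightarrow> 'v) \<Rightarrow> ('v \<Rightarrow> ereal) \<Rightarrow> ('v \<times> ereal) set" where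
  "mt_points V r par f = {(v, h). v \<in> V - {r} \<and> f v \<le> h \<and> h < f (par v)} \<union> {(r, \<infinity>)}"

text \<open>x \<preceq> y: there is an f-increasing path from x to y.\<close>
definition mt_le :: "('v \<Rightarrow> 'v) \<Rightarrow> 'v \<times> ereal \<Rightarrow> 'v \<times> ereal \<Rightarrow> bool" where
  "mt_le par x y \<longleftrightarrow> vanc par (fst x) (fst y) \<and> snd x \<le> snd y"

definition mt_leaves :: "'v set \<Rightarrow> 'v \<Rightarrow> ('v \<Rightarrow> 'v) \<Rightarrow> ('v \<Rightarrow> ereal) \<Rightarrow> ('v \<times> ereal) set" where
  "mt_leaves V r par f = {(v, f v) | v. is_leaf V r par v}"

definition mt_layer :: "'v set \<Rightarrow> 'v \<Rightarrow> ('v \<Rightarrow> 'v) \<Rightarrow> ('v \<Rightarrow> ereal) \<Rightarrow> ereal \<Rightarrow> ('v \<times> ereal) set" where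
  "mt_layer V r par f h = {x \<in> mt_points V r par f. snd x = h}"

definition mt_anc :: "'v set \<Rightarrow> 'v \<Rightarrow> ('v \<Rightarrow> 'v) \<Rightarrow> ('v \<Rightarrow> ereal) \<Rightarrow> ereal \<Rightarrow> 'v \<times> ereal \<Rightarrow> 'v \<times> ereal" where
  "mt_anc V r par f h x = (THE y. y \<in> mt_points V r par f \<and> mt_le par x y \<and> snd y = h)"

definition mt_subtree :: "'v set \<Rightarrow> 'v \<Rightarrow> ('v \<Rightarrow> 'v) \<Rightarrow> ('v \<Rightarrow> ereal) \<Rightarrow> 'v \<times> ereal \<Rightarrow> ('v \<times> ereal) set" where
  "mt_subtree V r par f x = {y \<in> mt_points V r par f. mt_le par y x}"

definition mt_lca :: "'v set \<Rightarrow> 'v \<Rightarrow> ('v \<Rightarrow> 'v) \<Rightarrow> ('v \<Rightarrow> ereal) \<Rightarrow> 'v \<times> ereal \<Rightarrow> 'v \<times> ereal \<Rightarrow> 'v \<times> ereal" where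
  "mt_lca V r par f x y = (THE z. z \<in> mt_points V r par f \<and> mt_le par x z \<and> mt_le par y z \<and>
      (\<forall>z'\<in>mt_points V r par f. mt_le par x z' \<and> mt_le par y z' \<longrightarrow> mt_le par z z'))"

definition total_order_on :: "'a set \<Rightarrow> ('a \<Rightarrow> 'a \<Rightarrow> bool) \<Rightarrow> bool" where
  "total_order_on A R \<longleftrightarrow>
     (\<forall>x\<in>A. R x x) \<and>
     (\<forall>x\<in>A. \<forall>y\<in>A. R x y \<and> R y x \<longrightarrow> x = y) \<and>
     (\<forall>x\<in>A. \<forall>y\<in>A. \<forall>z\<in>A. R x y \<and> R y z \<longrightarrow> R x z) \<and>
     (\<forall>x\<in>A. \<forall>y\<in>A. R x y \<or> R y x)"

definition layer_order :: "'v set \<Rightarrow> 'v \<Rightarrow> ('v \<Rightarrow> 'v) \<Rightarrow> ('v \<Rightarrow> ereal) \<Rightarrow>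
    (real \<Rightarrow> 'v \<times> ereal \<Rightarrow> 'v \<times> ereal \<Rightarrow> bool) \<Rightarrow> bool" where
  "layer_order V r par f ord \<longleftrightarrow>
     (\<forall>h. 0 \<le> h \<longrightarrow> total_order_on (mt_layer V r par f (ereal h)) (ord h)) \<and>
     (\<forall>h1 h2 x1 x2. 0 \<le> h1 \<longrightarrow> h1 \<le> h2 \<longrightarrow>
        x1 \<in> mt_layer V r par f (ereal h1) \<longrightarrow> x2 \<in> mt_layer V r par f (ereal h1) \<longrightarrow>
        ord h1 x1 x2 \<longrightarrow>
        ord h2 (mt_anc V r par f (ereal h2) x1) (mt_anc V r par f (ereal h2) x2))"

definition leaf_rel :: "'v set \<Rightarrow> 'v \<Rightarrow> ('v \<Rightarrow> 'v) \<Rightarrow> ('v \<Rightarrow> ereal) \<Rightarrow>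
    (real \<Rightarrow> 'v \<times> ereal \<Rightarrow> 'v \<times> ereal \<Rightarrow> bool) \<Rightarrow> 'v \<times> ereal \<Rightarrow> 'v \<times> ereal \<Rightarrow> bool" where
  "leaf_rel V r par f ord u1 u2 \<longleftrightarrow>
     (let h = max (snd u1) (snd u2)
      in ord (real_of_ereal h) (mt_anc V r par f h u1) (mt_anc V r par f h u2))"

end

theory Submission
  imports Defs
begin

text \<open>Let z be any point above both u1 and u2 (such as their lowest common ancestor) and let
g = max(f u, f z).  The ancestors of u1 and u2 at height g both equal the ancestor a of z at
height g.  Consistency of the layer-order pushes u1 \<sqsubseteq>_L u \<sqsubseteq>_L u2 up to
a \<le>_g anc_g(u) \<le>_g a, so anc_g(u) = a by antisymmetry.  If f u \<le> f z this says that u lies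
below z; otherwise it says that z lies below the leaf u, so z = u.\<close>

lemma vanc_refl: "vanc par v v"
  unfolding vanc_def by (metis funpow_0)

lemma vanc_par: "vanc par v (par v)"
  unfolding vanc_def by (rule exI[of _ 1]) simp

lemma vanc_trans:
  assumes "vanc par u v" "vanc par v w"
  shows "vanc par u w"
proof -
  obtain m n where "(par ^^ m) u = v" "(par ^^ n) v = w"
    using assms unfolding vanc_def by blast
  then have "(par ^^ (n + m)) u = w" by (simp add: funpow_add)
  then show ?thesis unfolding vanc_def by blast
qed

lemma vanc_funpow_diff:
  assumes "(par ^^ m) u = v" "(par ^^ n) u = w" "m \<le> n"
  shows "vanc par v w"
proof -
  have "(par ^^ (n - m)) v = (par ^^ (n - m + m)) u" using assms(1) by (simp add: funpow_add)
  then show ?thesis using assms(2,3) unfolding vanc_def by auto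
qed

lemma vanc_total:
  assumes "vanc par u v" "vanc par u w"
  shows "vanc par v w \<or> vanc par w v"
proof -
  obtain m n where m: "(par ^^ m) u = v" and n: "(par ^^ n) u = w"
    using assms unfolding vanc_def by blast
  show ?thesis
    using vanc_funpow_diff[OF m n] vanc_funpow_diff[OF n m] by linarith
qed

lemma vanc_par_if_neq:
  assumes "vanc par v w" "v \<noteq> w"
  shows "vanc par (par v) w"
proof -
  obtain n where n: "(par ^^ n) v = w" using assms(1) unfolding vanc_def by blast
  with assms(2) obtain m where "n = Suc m" by (cases n) auto
  with n have "(par ^^ m) (par v) = w" by (simp add: funpow_swap1)
  then show ?thesis unfolding vanc_def by blast
qed

text \<open>The first ancestor of v1 that is also an ancestor of v2 is below every common ancestor.\<close>
lemma vanc_least_common_ancestor: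
  assumes "vanc par v1 c" "vanc par v2 c"
  obtains w where "vanc par v1 w" "vanc par v2 w"
    "\<And>w'. vanc par v1 w' \<Longrightarrow> vanc par v2 w' \<Longrightarrow> vanc par w w'"
proof -
  define P where "P n \<longleftrightarrow> vanc par v2 ((par ^^ n) v1)" for n
  obtain N where "(par ^^ N) v1 = c" using assms(1) unfolding vanc_def by blast
  with assms(2) have "P N" unfolding P_def by simp
  define n where "n = (LEAST n. P n)"
  have "P n" unfolding n_def by (rule LeastI) fact
  show thesis
  proof (rule that)
    show "vanc par v1 ((par ^^ n) v1)" unfolding vanc_def by blast
    show "vanc par v2 ((par ^^ n) v1)" using \<open>P n\<close> unfolding P_def .
  next
    fix w' assume "vanc par v1 w'" "vanc par v2 w'"
    then obtain m where m: "(par ^^ m) v1 = w'" "P m" unfolding P_def vanc_def[of par v1] by blast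
    have "n \<le> m" unfolding n_def using m(2) by (rule Least_le)
    then show "vanc par ((par ^^ n) v1) w'" by (rule vanc_funpow_diff[OF refl m(1)])
  qed
qed

lemma merge_treeD:
  assumes "merge_tree V r par f"
  shows "r \<in> V" "par r = r" "v \<in> V \<Longrightarrow> par v \<in> V"
    "v \<in> V \<Longrightarrow> vanc par v r"
    "v \<in> V \<Longrightarrow> f v = \<infinity> \<longleftrightarrow> v = r"
    "v \<in> V \<Longrightarrow> v \<noteq> r \<Longrightarrow> f v < f (par v)"
    "is_leaf V r par v \<Longrightarrow> 0 \<le> f v"
  using assms unfolding merge_tree_def vanc_def by auto

lemma vanc_in_V:
  assumes "merge_tree V r par f" "v \<in> V" "vanc par v w"
  shows "w \<in> V"
proof -
  obtain n where "(par ^^ n) v = w" using assms(3) unfolding vanc_def by blast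
  moreover have "(par ^^ n) v \<in> V" for n
    by (induction n) (simp_all add: assms(2) merge_treeD(3)[OF assms(1)])
  ultimately show ?thesis by blast
qed

lemma vanc_root:
  assumes "merge_tree V r par f" "vanc par r w"
  shows "w = r"
proof -
  have "(par ^^ n) r = r" for n
    by (induction n) (simp_all add: merge_treeD(2)[OF assms(1)])
  then show ?thesis using assms(2) unfolding vanc_def by blast
qed

lemma f_mono_vanc:
  assumes MT: "merge_tree V r par f" and "v \<in> V" "vanc par v w"
  shows "f v \<le> f w"
proof -
  obtain n where "(par ^^ n) v = w" using assms(3) unfolding vanc_def by blast
  then show ?thesis using \<open>v \<in> V\<close>
  proof (induction n arbitrary: v)
    case (Suc n)
    have "f v \<le> f (par v)"
      using merge_treeD(2)[OF MT] merge_treeD(6)[OF MT Suc.prems(2)] by (cases "v = r") auto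
    also have "\<dots> \<le> f w"
      using Suc merge_treeD(3)[OF MT] by (simp add: funpow_swap1)
    finally show ?case .
  qed simp
qed

lemma mt_pointsD:
  assumes MT: "merge_tree V r par f" and "y \<in> mt_points V r par f"
  shows "fst y \<in> V" "f (fst y) \<le> snd y" "fst y \<noteq> r \<Longrightarrow> snd y < f (par (fst y))"
  using assms(2) merge_treeD(1,5)[OF MT] unfolding mt_points_def by auto

lemma vertex_in_mt_points:
  assumes MT: "merge_tree V r par f" and "v \<in> V"
  shows "(v, f v) \<in> mt_points V r par f"
  using assms merge_treeD(5,6)[OF MT] unfolding mt_points_def by (cases "v = r") auto

lemma mt_points_eq_if_vanc:
  assumes MT: "merge_tree V r par f"
    and y: "y \<in> mt_points V r par f" and y': "y' \<in> mt_points V r par f"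
    and "vanc par (fst y) (fst y')" "snd y = snd y'"
  shows "y = y'"
proof (rule ccontr)
  assume "y \<noteq> y'"
  with assms(5) have ne: "fst y \<noteq> fst y'" by (simp add: prod_eq_iff)
  then have "fst y \<noteq> r" using assms(4) vanc_root[OF MT] by metis
  then have "snd y < f (par (fst y))" using mt_pointsD(3)[OF MT y] by blast
  also have "\<dots> \<le> f (fst y')"
    using f_mono_vanc[OF MT merge_treeD(3)[OF MT mt_pointsD(1)[OF MT y]] vanc_par_if_neq[OF assms(4) ne]] .
  also have "\<dots> \<le> snd y'" using mt_pointsD(2)[OF MT y'] .
  finally show False using assms(5) by simp
qed

lemma mt_le_refl: "mt_le par x x"
  unfolding mt_le_def by (simp add: vanc_refl)

lemma mt_le_trans: "mt_le par x y \<Longrightarrow> mt_le par y z \<Longrightarrow> mt_le par x z"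
  unfolding mt_le_def by (metis vanc_trans order_trans)

lemma mt_le_antisym:
  assumes "merge_tree V r par f" "x \<in> mt_points V r par f" "y \<in> mt_points V r par f"
    "mt_le par x y" "mt_le par y x"
  shows "x = y"
  using assms mt_points_eq_if_vanc[OF assms(1-3)] unfolding mt_le_def by auto

lemma mt_le_vertex:
  assumes "merge_tree V r par f" "y \<in> mt_points V r par f" "vanc par w (fst y)" "w \<in> V"
  shows "mt_le par (w, f w) y"
proof -
  have "f w \<le> f (fst y)" using f_mono_vanc[OF assms(1,4,3)] .
  also have "\<dots> \<le> snd y" using mt_pointsD(2)[OF assms(1,2)] .
  finally show ?thesis using assms(3) unfolding mt_le_def by simp
qed

lemma exists_edge_at_height:
  assumes MT: "merge_tree V r par f" and "v \<in> V" "f v \<le> h" "h < \<infinity>"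
  shows "\<exists>w. vanc par v w \<and> w \<noteq> r \<and> f w \<le> h \<and> h < f (par w)"
proof -
  obtain n where "(par ^^ n) v = r"
    using merge_treeD(4)[OF MT \<open>v \<in> V\<close>] unfolding vanc_def by blast
  then show ?thesis using \<open>v \<in> V\<close> \<open>f v \<le> h\<close>
  proof (induction n arbitrary: v)
    case 0
    then show ?case using \<open>h < \<infinity>\<close> merge_treeD(5)[OF MT merge_treeD(1)[OF MT]] by auto
  next
    case (Suc n)
    show ?case
    proof (cases "h < f (par v)")
      case True
      have "f v \<noteq> \<infinity>" using Suc.prems(3) \<open>h < \<infinity>\<close> by auto
      then have "v \<noteq> r" using merge_treeD(5)[OF MT Suc.prems(2)] by simp
      with True Suc.prems(3) show ?thesis by (intro exI[of _ v]) (simp add: vanc_refl)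
    next
      case False
      have "(par ^^ n) (par v) = r" using Suc.prems(1) by (simp add: funpow_swap1)
      moreover have "f (par v) \<le> h" using False by simp
      ultimately obtain w where "vanc par (par v) w" "w \<noteq> r" "f w \<le> h" "h < f (par w)"
        using Suc.IH merge_treeD(3)[OF MT Suc.prems(2)] by blast
      then show ?thesis by (intro exI[of _ w]) (simp add: vanc_trans[OF vanc_par])
    qed
  qed
qed

lemma mt_anc_exists:
  assumes MT: "merge_tree V r par f" and x: "x \<in> mt_points V r par f" and "snd x \<le> h"
  shows "\<exists>y\<in>mt_points V r par f. mt_le par x y \<and> snd y = h"
proof (cases "h = \<infinity>")
  case True
  then show ?thesis using merge_treeD(4)[OF MT mt_pointsD(1)[OF MT x]]
    unfolding mt_le_def mt_points_def by auto
next
  case False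
  then obtain w where w: "vanc par (fst x) w" "w \<noteq> r" "f w \<le> h" "h < f (par w)"
    using exists_edge_at_height[OF MT mt_pointsD(1)[OF MT x]
        order_trans[OF mt_pointsD(2)[OF MT x] assms(3)]] by auto
  then have "(w, h) \<in> mt_points V r par f"
    using vanc_in_V[OF MT mt_pointsD(1)[OF MT x]] unfolding mt_points_def by auto
  moreover have "mt_le par x (w, h)" using w assms(3) unfolding mt_le_def by simp
  ultimately show ?thesis by auto
qed

lemma mt_anc_eqI:
  assumes MT: "merge_tree V r par f"
    and y: "y \<in> mt_points V r par f" and xy: "mt_le par x y" and "snd y = h"
  shows "mt_anc V r par f h x = y"
  unfolding mt_anc_def
proof (rule the_equality)
  show "y \<in> mt_points V r par f \<and> mt_le par x y \<and> snd y = h" using assms by simp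
next
  fix y' assume y': "y' \<in> mt_points V r par f \<and> mt_le par x y' \<and> snd y' = h"
  then have same_height: "snd y' = snd y" using assms(4) by simp
  have "vanc par (fst x) (fst y')" "vanc par (fst x) (fst y)"
    using y' xy unfolding mt_le_def by simp_all
  then consider "vanc par (fst y') (fst y)" | "vanc par (fst y) (fst y')"
    using vanc_total by metis
  then show "y' = y"
  proof cases
    case 1
    then show ?thesis using mt_points_eq_if_vanc[OF MT _ y _ same_height] y' by simp
  next
    case 2
    then show ?thesis using mt_points_eq_if_vanc[OF MT y _ _ same_height[symmetric]] y' by simp
  qed
qed

lemma mt_anc_spec:
  assumes MT: "merge_tree V r par f" and "x \<in> mt_points V r par f" "snd x \<le> h"
  shows "mt_anc V r par f h x \<in> mt_points V r par f" "mt_le par x (mt_anc V r par f h x)"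
    "snd (mt_anc V r par f h x) = h"
proof -
  obtain y where y: "y \<in> mt_points V r par f" "mt_le par x y" "snd y = h"
    using mt_anc_exists[OF assms] by blast
  moreover have "mt_anc V r par f h x = y" using mt_anc_eqI[OF MT y] .
  ultimately show "mt_anc V r par f h x \<in> mt_points V r par f" "mt_le par x (mt_anc V r par f h x)"
    "snd (mt_anc V r par f h x) = h" by simp_all
qed

lemma mt_anc_eq_if_mt_le:
  assumes MT: "merge_tree V r par f"
    and "x \<in> mt_points V r par f" "y \<in> mt_points V r par f" "mt_le par x y" "snd y \<le> h"
  shows "mt_anc V r par f h x = mt_anc V r par f h y"
  using mt_anc_spec[OF MT assms(3,5)] mt_le_trans[OF assms(4)] by (intro mt_anc_eqI[OF MT]) simp_all

lemma mt_anc_self: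
  "merge_tree V r par f \<Longrightarrow> x \<in> mt_points V r par f \<Longrightarrow> mt_anc V r par f (snd x) x = x"
  by (rule mt_anc_eqI) (simp_all add: mt_le_refl)

text \<open>A leaf of zero height exists and differs from the root, so the root has a child.\<close>
lemma root_not_leaf:
  assumes MT: "merge_tree V r par f"
  shows "\<not> is_leaf V r par r"
proof -
  have child: "\<exists>w\<in>V. w \<noteq> r \<and> par w = r" if "(par ^^ n) v = r" "v \<in> V" "v \<noteq> r" for n v
    using that
  proof (induction n arbitrary: v)
    case (Suc n)
    show ?case
    proof (cases "par v = r")
      case False
      then show ?thesis
        using Suc.IH[of "par v"] Suc.prems merge_treeD(3)[OF MT] by (simp add: funpow_swap1)
    qed (use Suc.prems in blast)
  qed simp
  obtain l where l: "is_leaf V r par l" "f l = 0" using MT unfolding merge_tree_def by auto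
  have "l \<in> V" using l(1) unfolding is_leaf_def by blast
  then have "l \<noteq> r" using merge_treeD(5)[OF MT \<open>l \<in> V\<close>] l(2) by auto
  moreover obtain n where "(par ^^ n) l = r"
    using merge_treeD(4)[OF MT \<open>l \<in> V\<close>] unfolding vanc_def by blast
  ultimately have "\<exists>w\<in>V. w \<noteq> r \<and> par w = r" using child \<open>l \<in> V\<close> by blast
  then show ?thesis unfolding is_leaf_def by blast
qed

lemma is_leafD:
  assumes "merge_tree V r par f" "is_leaf V r par v"
  shows "v \<in> V" "v \<noteq> r"
  using assms(2) root_not_leaf[OF assms(1)] unfolding is_leaf_def by auto

lemma mt_leavesE:
  assumes MT: "merge_tree V r par f" and "u \<in> mt_leaves V r par f"
  obtains v where "u = (v, f v)" "is_leaf V r par v" "u \<in> mt_points V r par f"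
    "0 \<le> f v" "f v \<noteq> \<infinity>"
proof -
  obtain v where v: "u = (v, f v)" "is_leaf V r par v" using assms(2) unfolding mt_leaves_def by blast
  moreover have "f v \<noteq> \<infinity>"
    using merge_treeD(5)[OF MT is_leafD(1)[OF MT v(2)]] is_leafD(2)[OF MT v(2)] by simp
  ultimately show thesis
    using that vertex_in_mt_points[OF MT is_leafD(1)[OF MT]] merge_treeD(7)[OF MT] by blast
qed

lemma vanc_leaf_eq:
  assumes MT: "merge_tree V r par f" and "is_leaf V r par v" "w \<in> V" "vanc par w v"
  shows "w = v"
proof (rule ccontr)
  assume "w \<noteq> v"
  then obtain n where "par ((par ^^ n) w) = v"
    using vanc_par_if_neq[OF assms(4)] unfolding vanc_def by (auto simp: funpow_swap1)
  moreover have "(par ^^ n) w \<in> V" using vanc_in_V[OF MT assms(3)] unfolding vanc_def by blast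
  ultimately show False
    using assms(2) is_leafD(2)[OF MT assms(2)] merge_treeD(2)[OF MT] unfolding is_leaf_def by auto
qed

lemma mt_le_leaf_eq:
  assumes MT: "merge_tree V r par f" and "is_leaf V r par v"
    and "y \<in> mt_points V r par f" "mt_le par y (v, f v)"
  shows "y = (v, f v)"
proof -
  have "fst y = v"
    using vanc_leaf_eq[OF MT assms(2) mt_pointsD(1)[OF MT assms(3)]] assms(4)
    unfolding mt_le_def by simp
  moreover have "snd y = f v"
    using mt_pointsD(2)[OF MT assms(3)] assms(4) \<open>fst y = v\<close> unfolding mt_le_def by simp
  ultimately show ?thesis by (simp add: prod_eq_iff)
qed

lemma mt_lca_vertices:
  assumes MT: "merge_tree V r par f" and "v1 \<in> V" "v2 \<in> V"
  defines "z \<equiv> mt_lca V r par f (v1, f v1) (v2, f v2)"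
  shows "z \<in> mt_points V r par f" "mt_le par (v1, f v1) z" "mt_le par (v2, f v2) z"
proof -
  obtain w where w1: "vanc par v1 w" and w2: "vanc par v2 w"
    and least: "\<And>w'. vanc par v1 w' \<Longrightarrow> vanc par v2 w' \<Longrightarrow> vanc par w w'"
    using vanc_least_common_ancestor[OF merge_treeD(4)[OF MT assms(2)] merge_treeD(4)[OF MT assms(3)]]
    by blast
  have wV: "w \<in> V" using vanc_in_V[OF MT assms(2) w1] .
  let ?z = "(w, f w)"
  have zP: "?z \<in> mt_points V r par f" using vertex_in_mt_points[OF MT wV] .
  have le: "mt_le par (v1, f v1) ?z" "mt_le par (v2, f v2) ?z"
    using mt_le_vertex[OF MT zP] w1 w2 assms(2,3) by simp_all
  have below: "mt_le par ?z z'"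
    if "z' \<in> mt_points V r par f" "mt_le par (v1, f v1) z'" "mt_le par (v2, f v2) z'" for z'
  proof -
    have "vanc par v1 (fst z')" "vanc par v2 (fst z')" using that(2,3) unfolding mt_le_def by simp_all
    then have "vanc par w (fst z')" by (rule least)
    then show ?thesis using mt_le_vertex[OF MT that(1) _ wV] by simp
  qed
  have "z = ?z"
    unfolding z_def mt_lca_def
  proof (rule the_equality)
    fix z'
    assume z': "z' \<in> mt_points V r par f \<and> mt_le par (v1, f v1) z' \<and> mt_le par (v2, f v2) z' \<and>
      (\<forall>z''\<in>mt_points V r par f.
         mt_le par (v1, f v1) z'' \<and> mt_le par (v2, f v2) z'' \<longrightarrow> mt_le par z' z'')"
    then have "mt_le par z' ?z" "mt_le par ?z z'" using zP le below by simp_all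
    then show "z' = ?z" using mt_le_antisym[OF MT] zP z' by simp
  qed (use zP le below in simp)
  then show "z \<in> mt_points V r par f" "mt_le par (v1, f v1) z" "mt_le par (v2, f v2) z"
    using zP le by simp_all
qed

lemma mt_le_infinite_point:
  assumes MT: "merge_tree V r par f"
    and "x \<in> mt_points V r par f" "z \<in> mt_points V r par f" "snd z = \<infinity>"
  shows "mt_le par x z"
proof -
  have "fst z = r" using mt_pointsD(3)[OF MT assms(3)] assms(4) by force
  then show ?thesis using merge_treeD(4)[OF MT mt_pointsD(1)[OF MT assms(2)]] assms(4)
    unfolding mt_le_def by simp
qed

lemma layer_order_consistent:
  assumes "layer_order V r par f ord" "0 \<le> h1" "h1 \<le> h2"
    "x1 \<in> mt_layer V r par f (ereal h1)" "x2 \<in> mt_layer V r par f (ereal h1)" "ord h1 x1 x2"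
  shows "ord h2 (mt_anc V r par f (ereal h2) x1) (mt_anc V r par f (ereal h2) x2)"
  using assms unfolding layer_order_def by blast

lemma layer_order_antisym:
  assumes "layer_order V r par f ord" "0 \<le> h"
    "x \<in> mt_layer V r par f (ereal h)" "y \<in> mt_layer V r par f (ereal h)" "ord h x y" "ord h y x"
  shows "x = y"
  using assms unfolding layer_order_def total_order_on_def by blast

lemma leaf_rel_imp_ord_mt_anc:
  assumes MT: "merge_tree V r par f" and LO: "layer_order V r par f ord"
    and x: "x \<in> mt_points V r par f" and y: "y \<in> mt_points V r par f"
    and "0 \<le> snd x" "snd x \<le> ereal g" "0 \<le> snd y" "snd y \<le> ereal g"
    and "leaf_rel V r par f ord x y"
  shows "ord g (mt_anc V r par f (ereal g) x) (mt_anc V r par f (ereal g) y)"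
proof -
  let ?anc = "mt_anc V r par f"
  define h where "h = max (snd x) (snd y)"
  have "0 \<le> h" "h \<le> ereal g" using assms(5-8) unfolding h_def by (auto simp: le_max_iff_disj)
  then obtain hr where hr: "h = ereal hr" "0 \<le> hr" "hr \<le> g" by (cases h) auto
  have hx: "snd x \<le> h" and hy: "snd y \<le> h" unfolding h_def by simp_all
  have "?anc h x \<in> mt_layer V r par f (ereal hr)" "?anc h y \<in> mt_layer V r par f (ereal hr)"
    using mt_anc_spec[OF MT x hx] mt_anc_spec[OF MT y hy] hr(1) unfolding mt_layer_def by simp_all
  moreover have "ord hr (?anc h x) (?anc h y)"
    using assms(9) unfolding leaf_rel_def Let_def h_def[symmetric] hr(1) by simp
  ultimately have "ord g (?anc g (?anc h x)) (?anc g (?anc h y))"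
    by (rule layer_order_consistent[OF LO hr(2,3)])
  moreover have "snd (?anc h x) \<le> ereal g" "snd (?anc h y) \<le> ereal g"
    using mt_anc_spec(3)[OF MT x hx] mt_anc_spec(3)[OF MT y hy] hr by simp_all
  then have "?anc g x = ?anc g (?anc h x)" "?anc g y = ?anc g (?anc h y)"
    using mt_anc_eq_if_mt_le[OF MT x mt_anc_spec(1,2)[OF MT x hx]]
      mt_anc_eq_if_mt_le[OF MT y mt_anc_spec(1,2)[OF MT y hy]] by blast+
  ultimately show ?thesis by simp
qed

text \<open>If f u \<le> f z the common ancestor is z itself; otherwise it is u, and no point other than u
  lies below the leaf u.\<close>
lemma leaf_mt_le_if_same_mt_anc:
  assumes MT: "merge_tree V r par f" and "is_leaf V r par v" and z: "z \<in> mt_points V r par f"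
    and same: "mt_anc V r par f (max (f v) (snd z)) (v, f v) = mt_anc V r par f (max (f v) (snd z)) z"
  shows "mt_le par (v, f v) z"
proof -
  have u: "(v, f v) \<in> mt_points V r par f"
    using vertex_in_mt_points[OF MT is_leafD(1)[OF MT assms(2)]] .
  show ?thesis
  proof (cases "f v \<le> snd z")
    case True
    then have "mt_anc V r par f (snd z) (v, f v) = z" using same mt_anc_self[OF MT z] by simp
    then show ?thesis using mt_anc_spec(2)[OF MT u, of "snd z"] True by simp
  next
    case False
    then have "mt_anc V r par f (f v) z = (v, f v)" using same mt_anc_self[OF MT u] by simp
    then have "mt_le par z (v, f v)" using mt_anc_spec(2)[OF MT z, of "f v"] False by simp
    then have "z = (v, f v)" by (rule mt_le_leaf_eq[OF MT assms(2) z])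
    then show ?thesis by (simp add: mt_le_refl)
  qed
qed

lemma leaf_mt_le_if_leaf_rel_between:
  assumes MT: "merge_tree V r par f" and LO: "layer_order V r par f ord"
    and u: "u \<in> mt_leaves V r par f" and z: "z \<in> mt_points V r par f"
    and x1: "x1 \<in> mt_points V r par f" "0 \<le> snd x1" "mt_le par x1 z"
    and x2: "x2 \<in> mt_points V r par f" "0 \<le> snd x2" "mt_le par x2 z"
    and "leaf_rel V r par f ord x1 u" "leaf_rel V r par f ord u x2"
  shows "mt_le par u z"
proof -
  let ?anc = "mt_anc V r par f"
  obtain v where v: "u = (v, f v)" "is_leaf V r par v" "u \<in> mt_points V r par f" "0 \<le> f v"
    "f v \<noteq> \<infinity>"
    using mt_leavesE[OF MT u] by blast
  show ?thesis
  proof (cases "snd z = \<infinity>")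
    case True
    then show ?thesis using mt_le_infinite_point[OF MT v(3) z] by simp
  next
    case False
    obtain g where g: "ereal g = max (f v) (snd z)"
      using False v(4,5) by (cases "max (f v) (snd z)") (auto simp: max_def split: if_splits)
    have below_g: "snd x1 \<le> ereal g" "snd u \<le> ereal g" "snd x2 \<le> ereal g" "snd z \<le> ereal g"
      using x1(3) x2(3) v(1) unfolding g mt_le_def by (auto simp: le_max_iff_disj)
    have "0 \<le> snd u" using v by simp
    have "ord g (?anc g x1) (?anc g u)" "ord g (?anc g u) (?anc g x2)"
      using leaf_rel_imp_ord_mt_anc[OF MT LO x1(1) v(3) x1(2) below_g(1) \<open>0 \<le> snd u\<close> below_g(2)]
        leaf_rel_imp_ord_mt_anc[OF MT LO v(3) x2(1) \<open>0 \<le> snd u\<close> below_g(2) x2(2) below_g(3)]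
        assms(11,12) by simp_all
    moreover have "?anc g x1 = ?anc g z" "?anc g x2 = ?anc g z"
      using mt_anc_eq_if_mt_le[OF MT x1(1) z x1(3) below_g(4)]
        mt_anc_eq_if_mt_le[OF MT x2(1) z x2(3) below_g(4)] by simp_all
    ultimately have "ord g (?anc g z) (?anc g u)" "ord g (?anc g u) (?anc g z)" by simp_all
    moreover have "?anc g z \<in> mt_layer V r par f (ereal g)" "?anc g u \<in> mt_layer V r par f (ereal g)"
      using mt_anc_spec[OF MT z below_g(4)] mt_anc_spec[OF MT v(3) below_g(2)]
      unfolding mt_layer_def by simp_all
    moreover have "0 \<le> g" using order_trans[OF \<open>0 \<le> snd u\<close> below_g(2)] by simp
    ultimately have "?anc g u = ?anc g z" using layer_order_antisym[OF LO] by metis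
    then show ?thesis
      using leaf_mt_le_if_same_mt_anc[OF MT v(2) z] unfolding v(1) g[symmetric] by simp
  qed
qed

theorem lemma3:
  fixes V :: "'v set" and r :: 'v and par :: "'v \<Rightarrow> 'v" and f :: "'v \<Rightarrow> ereal"
    and ord :: "real \<Rightarrow> 'v \<times> ereal \<Rightarrow> 'v \<times> ereal \<Rightarrow> bool"
  assumes "merge_tree V r par f"
    and "layer_order V r par f ord"
    and "u \<in> mt_leaves V r par f" and "u1 \<in> mt_leaves V r par f" and "u2 \<in> mt_leaves V r par f"
    and "leaf_rel V r par f ord u1 u"
    and "leaf_rel V r par f ord u u2"
  shows "u \<in> mt_subtree V r par f (mt_lca V r par f u1 u2)"
proof -
  note MT = assms(1)
  obtain v1 where u1: "u1 = (v1, f v1)" "is_leaf V r par v1" "u1 \<in> mt_points V r par f" "0 \<le> f v1"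
    using mt_leavesE[OF MT assms(4)] by blast
  obtain v2 where u2: "u2 = (v2, f v2)" "is_leaf V r par v2" "u2 \<in> mt_points V r par f" "0 \<le> f v2"
    using mt_leavesE[OF MT assms(5)] by blast
  define z where "z = mt_lca V r par f u1 u2"
  have z: "z \<in> mt_points V r par f" "mt_le par u1 z" "mt_le par u2 z"
    using mt_lca_vertices[OF MT is_leafD(1)[OF MT u1(2)] is_leafD(1)[OF MT u2(2)]] u1(1) u2(1)
    unfolding z_def by simp_all
  have "mt_le par u z"
    using leaf_mt_le_if_leaf_rel_between[OF MT assms(2,3) z(1) u1(3) _ z(2) u2(3) _ z(3) assms(6,7)]
      u1 u2 by simp
  moreover have "u \<in> mt_points V r par f" using mt_leavesE[OF MT assms(3)] by metis
  ultimately show ?thesis unfolding mt_subtree_def z_def by simp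
qed

end
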